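(* Let $H$ be a separable complex Hilbert space and $X$ a locally compact space with positive Borel measure $\mu$. Fix $f_{10}\in\overline{F}_0$ and let $F_1=\{Af_{10}:A\in\operatorname{GL}(H)\}$. The map $\theta:F_1\to\operatorname{GL}(H)$, $\theta(f)=\pi_1(\zeta^{-1}(f))$, is a bijection.
   Context: A frame on $H$ is a map $f:X\to H$ such that $x\mapsto\langle\phi,f(x)\rangle$ is measurable for every $\phi\in H$ and there exist $0<A\le B$ with $A\|\phi\|^2\le\int_X|\langle\phi,f(x)\rangle|^2d\mu(x)\le B\|\phi\|^2$ for all $\phi$; it is Parseval if $A=B=1$. $\operatorname{GL}(H)$ is the group of bounded invertible operators with bounded inverse, $U(H)$ the unitary group. $F$ is the set of frames $f$ with $\sup_x\|f(x)\|_H<\infty$, $F_0$ the Parseval ones. $(Af)(x)=A[f(x)]$. $\overline{F}_0\subset F_0$ is a fixed transversal of $F_0/U(H)$ (exactly one element from each orbit $\{Vf:V\in U(H)\}$). The map $\zeta:\operatorname{GL}(H)\times\overline{F}_0\to F$, $\zeta(A,f)=Af$, is a bijection; $\pi_1$ is projection onto the $\operatorname{GL}(H)$ factor. *)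

theory Defs
  imports "HOL-Analysis.Analysis" "HOL-Probability.Probability"
begin

text \<open>The distribution has no complex inner product spaces, so we introduce the
standard notion: a normed space with a complex scalar multiplication (compatible with
the real one) and a complex inner product, conjugate-linear in the first and linear in
the second argument, inducing the norm.\<close>

class complex_inner = real_normed_vector +
  fixes scaleC :: "complex \<Rightarrow> 'a \<Rightarrow> 'a" (infixr \<open>*\<^sub>C\<close> 75)
  fixes cinner :: "'a \<Rightarrow> 'a \<Rightarrow> complex"
  assumes scaleC_add_right: "a *\<^sub>C (x + y) = a *\<^sub>C x + a *\<^sub>C y"
    and scaleC_add_left: "(a + b) *\<^sub>C x = a *\<^sub>C x + b *\<^sub>C x"
    and scaleC_scaleC: "a *\<^sub>C (b *\<^sub>C x) = (a * b) *\<^sub>C x"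
    and scaleC_one: "1 *\<^sub>C x = x"
    and scaleR_scaleC: "scaleR r x = complex_of_real r *\<^sub>C x"
    and cinner_commute: "cinner x y = cnj (cinner y x)"
    and cinner_add_right: "cinner x (y + z) = cinner x y + cinner x z"
    and cinner_scaleC_right: "cinner x (a *\<^sub>C y) = a * cinner x y"
    and cinner_real: "Im (cinner x x) = 0"
    and cinner_ge_zero: "0 \<le> Re (cinner x x)"
    and cinner_eq_zero_iff: "cinner x x = 0 \<longleftrightarrow> x = 0"
    and norm_eq_sqrt_cinner: "norm x = sqrt (Re (cinner x x))"

class chilbert_space = complex_inner + complete_space

definition separable_space_type :: "'a::topological_space itself \<Rightarrow> bool" where
  "separable_space_type _ \<longleftrightarrow> (\<exists>D::'a set. countable D \<and> closure D = UNIV)"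

definition bounded_clinear_op :: "('h::complex_inner \<Rightarrow> 'h) \<Rightarrow> bool" where
  "bounded_clinear_op A \<longleftrightarrow> bounded_linear A \<and> (\<forall>c x. A (c *\<^sub>C x) = c *\<^sub>C A x)"

definition GL :: "('h::complex_inner \<Rightarrow> 'h) set" where
  "GL = {A. bounded_clinear_op A \<and> bij A \<and> bounded_clinear_op (inv A)}"

definition UH :: "('h::complex_inner \<Rightarrow> 'h) set" where
  "UH = {V. V \<in> GL \<and> (\<forall>x y. cinner (V x) (V y) = cinner x y)}"

definition frame_meas :: "'x measure \<Rightarrow> ('x \<Rightarrow> 'h::complex_inner) \<Rightarrow> bool" where
  "frame_meas M f \<longleftrightarrow> (\<forall>\<phi>. (\<lambda>x. cinner \<phi> (f x)) \<in> borel_measurable M)"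

definition frame :: "'x measure \<Rightarrow> ('x \<Rightarrow> 'h::complex_inner) \<Rightarrow> bool" where
  "frame M f \<longleftrightarrow> frame_meas M f \<and>
     (\<exists>a b::real. 0 < a \<and> a \<le> b \<and>
        (\<forall>\<phi>. ennreal (a * (norm \<phi>)\<^sup>2) \<le> (\<integral>\<^sup>+ x. ennreal ((cmod (cinner \<phi> (f x)))\<^sup>2) \<partial>M)
            \<and> (\<integral>\<^sup>+ x. ennreal ((cmod (cinner \<phi> (f x)))\<^sup>2) \<partial>M) \<le> ennreal (b * (norm \<phi>)\<^sup>2)))"

definition parseval_frame :: "'x measure \<Rightarrow> ('x \<Rightarrow> 'h::complex_inner) \<Rightarrow> bool" where
  "parseval_frame M f \<longleftrightarrow> frame_meas M f \<and>
     (\<forall>\<phi>. (\<integral>\<^sup>+ x. ennreal ((cmod (cinner \<phi> (f x)))\<^sup>2) \<partial>M) = ennreal ((norm \<phi>)\<^sup>2))"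

definition Fset :: "'x measure \<Rightarrow> ('x \<Rightarrow> 'h::complex_inner) set" where
  "Fset M = {f. frame M f \<and> (\<exists>K. \<forall>x\<in>space M. norm (f x) \<le> K)}"

definition F0set :: "'x measure \<Rightarrow> ('x \<Rightarrow> 'h::complex_inner) set" where
  "F0set M = {f \<in> Fset M. parseval_frame M f}"

definition op_act :: "('h \<Rightarrow> 'h) \<Rightarrow> ('x \<Rightarrow> 'h) \<Rightarrow> ('x \<Rightarrow> 'h)" where
  "op_act A f = (\<lambda>x. A (f x))"

definition transversal :: "'x measure \<Rightarrow> ('x \<Rightarrow> 'h::complex_inner) set \<Rightarrow> bool" where
  "transversal M T \<longleftrightarrow> T \<subseteq> F0set M \<and>
     (\<forall>f \<in> F0set M. \<exists>!g. g \<in> T \<and> (\<exists>V\<in>UH. g = op_act V f))"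

definition zeta :: "('h \<Rightarrow> 'h) \<times> ('x \<Rightarrow> 'h) \<Rightarrow> ('x \<Rightarrow> 'h)" where
  "zeta p = op_act (fst p) (snd p)"

end

theory Submission
  imports Defs
begin

text \<open>Only the injectivity of \<open>\<zeta>\<close> is needed: on the slice \<open>GL(H) \<times> {f\<^sub>1\<^sub>0}\<close>,
\<open>\<pi>\<^sub>1 \<circ> \<zeta>\<^sup>-\<^sup>1\<close> inverts \<open>A \<mapsto> \<zeta>(A, f\<^sub>1\<^sub>0) = A f\<^sub>1\<^sub>0\<close>, which is therefore a bijection
\<open>GL(H) \<rightarrow> F\<^sub>1\<close> with inverse \<open>\<theta>\<close>.\<close>

lemma the_inv_into_on_slice:
  assumes "inj_on g (A \<times> B)" and "a \<in> A" and "b \<in> B"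
  shows "the_inv_into (A \<times> B) g (g (a, b)) = (a, b)"
  using assms by (simp add: the_inv_into_f_f)

lemma bij_betw_fst_the_inv_into_slice:
  assumes inj: "inj_on g (A \<times> B)" and b: "b \<in> B"
  shows "bij_betw (\<lambda>y. fst (the_inv_into (A \<times> B) g y)) ((\<lambda>a. g (a, b)) ` A) A"
proof -
  have "fst (the_inv_into (A \<times> B) g (g (a, b))) = a" if "a \<in> A" for a
    using the_inv_into_on_slice[OF inj that b] by simp
  then show ?thesis
    by (intro bij_betw_byWitness[where f' = "\<lambda>a. g (a, b)"]) auto
qed

theorem mainTheorem15:
  fixes M :: "'x::topological_space measure"
    and T :: "('x \<Rightarrow> 'h::chilbert_space) set"
    and f10 :: "'x \<Rightarrow> 'h"
  assumes "separable_space_type TYPE('h)"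
    and "locally_compact_space (euclidean :: 'x topology)"
    and "sets M = sets borel"
    and "transversal M T"
    and "bij_betw zeta (GL \<times> T) (Fset M)"
    and "f10 \<in> T"
  shows "bij_betw (\<lambda>f. fst (the_inv_into (GL \<times> T) zeta f))
           ((\<lambda>A. op_act A f10) ` GL) GL"
proof -
  have "inj_on zeta (GL \<times> T)"
    using assms(5) by (rule bij_betw_imp_inj_on)
  from bij_betw_fst_the_inv_into_slice[OF this assms(6)]
  show ?thesis by (simp add: zeta_def)
qed

end
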